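(* For every formula $\varphi$, if $\vdash_{\mathbf{PTKv}^{-}}\varphi$ then $\varphi$ is valid (true at every world of every model).
   Context: Fix a countable set $\mathsf{Prop}$ of propositional variables, a countable set $\mathsf{Term}$ of atomic terms, and a finite set of agents $\mathcal{A}=\{1,\dots,n\}$. Let $\Theta_K=[0,1]\cap\mathbb{Q}$ and $\Theta_V^+=(\frac12,1]\cap\mathbb{Q}$. Formulas are generated by $\varphi::= p\mid t=s\mid\neg\varphi\mid(\varphi\to\psi)\mid K_i^\theta\varphi\mid Kv_i^\eta(t)$ with $p\in\mathsf{Prop}$, $t,s\in\mathsf{Term}$, $i\in\mathcal{A}$, $\theta\in\Theta_K$, $\eta\in\Theta_V^+$; other connectives are standard abbreviations. A model is $M=(W,D,\{P_i\}_{i\in\mathcal{A}},V,\mathsf{val})$ with $W\neq\emptyset$, $D\neq\emptyset$, $P_i(w)$ a countably additive probability measure on the powerset of $W$ for each $i,w$, $V:W\times\mathsf{Prop}\to\{0,1\}$, $\mathsf{val}:W\times\mathsf{Term}\to D$. Write $\llbracket\varphi\rrbracket^M=\{u\mid M,u\models\varphi\}$ and $\llbracket t=d\rrbracket^M=\{u\mid \mathsf{val}(u,t)=d\}$. Satisfaction: $M,w\models p$ iff $V(w,p)=1$; $M,w\models t=s$ iff $\mathsf{val}(w,t)=\mathsf{val}(w,s)$; Boolean clauses as usual; $M,w\models K_i^\theta\varphi$ iff $P_i(w)(\llbracket\varphi\rrbracket^M)\ge\theta$; $M,w\models Kv_i^\eta(t)$ iff there exists a unique $d\in D$ with $P_i(w)(\llbracket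 t=d\rrbracket^M)\ge\eta$. The system $\mathbf{PTKv}^{-}$ has rules Modus Ponens (from $\varphi$ and $\varphi\to\psi$ infer $\psi$) and $\mathrm{Nec}_K$ (from $\varphi$ infer $K_i^\theta\varphi$, for all $i\in\mathcal{A}$, $\theta\in\Theta_K$), and axiom schemata (for all agents $i$, terms $t,s,u$, formulas $\varphi,\psi$): all propositional tautologies; $t=t$; $t=s\to s=t$; $(t=s\wedge s=u)\to t=u$; $t=s\to((t=u)\leftrightarrow(s=u))$; $K_i^{\theta'}\varphi\to K_i^\theta\varphi$ for $\theta\le\theta'$ in $\Theta_K$; $K_i^\alpha(\varphi\to\psi)\to(K_i^\beta\varphi\to K_i^{\max\{0,\alpha+\beta-1\}}\psi)$ for $\alpha,\beta\in\Theta_K$; $K_i^\alpha\varphi\to\neg K_i^\beta\neg\varphi$ for $\alpha,\beta\in\Theta_K$ with $\alpha+\beta>1$; $K_i^0\varphi$; $K_i^1(t=s)\to(K_i^\theta(t=u)\leftrightarrow K_i^\theta(s=u))$ for $\theta\in\Theta_K$; $K_i^1(t=s)\to(Kv_i^\eta(t)\leftrightarrow Kv_i^\eta(s))$ for $\eta\in\Theta_V^+$. *)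

theory Defs
  imports "HOL-Probability.Probability"
begin

text \<open>Thresholds are rationals; well-formedness
  (thresholds in Theta_K resp. Theta_V^+) is imposed by wf_fm.\<close>

datatype ('p, 't, 'i) fm =
    Atom 'p
  | Eq 't 't
  | Neg "('p, 't, 'i) fm"
  | Imp "('p, 't, 'i) fm" "('p, 't, 'i) fm"
  | K 'i rat "('p, 't, 'i) fm"
  | Kv 'i rat 't

definition ThetaK :: "rat set" where
  "ThetaK = {x. 0 \<le> x \<and> x \<le> 1}"

definition ThetaV :: "rat set" where
  "ThetaV = {x. 1/2 < x \<and> x \<le> 1}"

fun wf_fm :: "('p, 't, 'i) fm \<Rightarrow> bool" where
  "wf_fm (Atom p) = True"
| "wf_fm (Eq t s) = True"
| "wf_fm (Neg \<phi>) = wf_fm \<phi>"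
| "wf_fm (Imp \<phi> \<psi>) = (wf_fm \<phi> \<and> wf_fm \<psi>)"
| "wf_fm (K i \<theta> \<phi>) = (\<theta> \<in> ThetaK \<and> wf_fm \<phi>)"
| "wf_fm (Kv i \<eta> t) = (\<eta> \<in> ThetaV)"

definition Conj :: "('p, 't, 'i) fm \<Rightarrow> ('p, 't, 'i) fm \<Rightarrow> ('p, 't, 'i) fm" where
  "Conj \<phi> \<psi> = Neg (Imp \<phi> (Neg \<psi>))"

definition Iff :: "('p, 't, 'i) fm \<Rightarrow> ('p, 't, 'i) fm \<Rightarrow> ('p, 't, 'i) fm" where
  "Iff \<phi> \<psi> = Conj (Imp \<phi> \<psi>) (Imp \<psi> \<phi>)"

text \<open>A formula is an instance of a propositional tautology if it is true under every
  Boolean assignment to its maximal non-Boolean subformulas.\<close>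

fun peval :: "(('p, 't, 'i) fm \<Rightarrow> bool) \<Rightarrow> ('p, 't, 'i) fm \<Rightarrow> bool" where
  "peval v (Neg \<phi>) = (\<not> peval v \<phi>)"
| "peval v (Imp \<phi> \<psi>) = (peval v \<phi> \<longrightarrow> peval v \<psi>)"
| "peval v \<phi> = v \<phi>"

definition tautology :: "('p, 't, 'i) fm \<Rightarrow> bool" where
  "tautology \<phi> = (\<forall>v. peval v \<phi>)"

definition is_model :: "('i \<Rightarrow> 'w \<Rightarrow> 'w measure) \<Rightarrow> bool" where
  "is_model P = (\<forall>i w. prob_space (P i w) \<and> space (P i w) = UNIV \<and> sets (P i w) = Pow UNIV)"

fun sat :: "('i \<Rightarrow> 'w \<Rightarrow> 'w measure) \<Rightarrow> ('w \<Rightarrow> 'p \<Rightarrow> bool) \<Rightarrow> ('w \<Rightarrow> 't \<Rightarrow> 'd)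
            \<Rightarrow> 'w \<Rightarrow> ('p, 't, 'i) fm \<Rightarrow> bool" where
  "sat P V val w (Atom p) = V w p"
| "sat P V val w (Eq t s) = (val w t = val w s)"
| "sat P V val w (Neg \<phi>) = (\<not> sat P V val w \<phi>)"
| "sat P V val w (Imp \<phi> \<psi>) = (sat P V val w \<phi> \<longrightarrow> sat P V val w \<psi>)"
| "sat P V val w (K i \<theta> \<phi>) =
     (measure (P i w) {u. sat P V val u \<phi>} \<ge> real_of_rat \<theta>)"
| "sat P V val w (Kv i \<eta> t) =
     (\<exists>!d. measure (P i w) {u. val u t = d} \<ge> real_of_rat \<eta>)"

inductive derivable :: "('p, 't, 'i) fm \<Rightarrow> bool" where
  Taut: "wf_fm \<phi> \<Longrightarrow> tautology \<phi> \<Longrightarrow> derivable \<phi>"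
| EqRefl: "derivable (Eq t t)"
| EqSym: "derivable (Imp (Eq t s) (Eq s t))"
| EqTrans: "derivable (Imp (Conj (Eq t s) (Eq s u)) (Eq t u))"
| EqSubst: "derivable (Imp (Eq t s) (Iff (Eq t u) (Eq s u)))"
| Mono: "wf_fm \<phi> \<Longrightarrow> \<theta> \<in> ThetaK \<Longrightarrow> \<theta>' \<in> ThetaK \<Longrightarrow> \<theta> \<le> \<theta>' \<Longrightarrow>
           derivable (Imp (K i \<theta>' \<phi>) (K i \<theta> \<phi>))"
| KDist: "wf_fm \<phi> \<Longrightarrow> wf_fm \<psi> \<Longrightarrow> \<alpha> \<in> ThetaK \<Longrightarrow> \<beta> \<in> ThetaK \<Longrightarrow>
           derivable (Imp (K i \<alpha> (Imp \<phi> \<psi>)) (Imp (K i \<beta> \<phi>) (K i (max 0 (\<alpha> + \<beta> - 1)) \<psi>)))"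
| KCons: "wf_fm \<phi> \<Longrightarrow> \<alpha> \<in> ThetaK \<Longrightarrow> \<beta> \<in> ThetaK \<Longrightarrow> \<alpha> + \<beta> > 1 \<Longrightarrow>
           derivable (Imp (K i \<alpha> \<phi>) (Neg (K i \<beta> (Neg \<phi>))))"
| KZero: "wf_fm \<phi> \<Longrightarrow> derivable (K i 0 \<phi>)"
| KSubst: "\<theta> \<in> ThetaK \<Longrightarrow>
           derivable (Imp (K i 1 (Eq t s)) (Iff (K i \<theta> (Eq t u)) (K i \<theta> (Eq s u))))"
| KvSubst: "\<eta> \<in> ThetaV \<Longrightarrow>
           derivable (Imp (K i 1 (Eq t s)) (Iff (Kv i \<eta> t) (Kv i \<eta> s)))"
| MP: "derivable \<phi> \<Longrightarrow> derivable (Imp \<phi> \<psi>) \<Longrightarrow> derivable \<psi>"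
| Nec: "derivable \<phi> \<Longrightarrow> \<theta> \<in> ThetaK \<Longrightarrow> derivable (K i \<theta> \<phi>)"

end

theory Submission
  imports Defs
begin

text \<open>The tautologies and the equality
  axioms hold world by world; each probabilistic axiom reflects an elementary property of a
  probability measure. \<open>KCons\<close> is the complement rule. \<open>KDist\<close> is the Frechet bound
  \<open>prob (A \<inter> B) \<ge> prob A + prob B - 1\<close> for \<open>A = \<lbrakk>\<phi>\<rbrakk>\<close> and \<open>B = \<lbrakk>\<phi> \<rightarrow> \<psi>\<rbrakk>\<close>,
  whose intersection lies in \<open>\<lbrakk>\<psi>\<rbrakk>\<close>. \<open>KSubst\<close> and \<open>KvSubst\<close> hold because sets agreeing
  on an event of probability one have the same probability, and \<open>Nec\<close> because a valid
  formula denotes the whole space.\<close>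

lemma (in prob_space) prob_Int_lower_bound:
  assumes "A \<in> events" "B \<in> events"
  shows "prob A + prob B - 1 \<le> prob (A \<inter> B)"
proof -
  have "prob (A - B) \<le> prob (space M - B)"
    using assms sets.sets_into_space by (intro finite_measure_mono) auto
  also have "\<dots> = 1 - prob B"
    using assms(2) by (rule prob_compl)
  finally show ?thesis
    using finite_measure_Diff'[OF assms] by simp
qed

lemma (in prob_space) prob_eq_if_agree_almost_surely:
  assumes "prob E = 1" "A \<in> events" "B \<in> events" "\<And>x. x \<in> E \<Longrightarrow> x \<in> A \<longleftrightarrow> x \<in> B"
  shows "prob A = prob B"
  using AE_prob_1[OF assms(1)] assms(2-4) by (intro measure_eq_AE) auto

lemma is_model_prob_space: "is_model P \<Longrightarrow> prob_space (P i w)"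
  and is_model_space: "is_model P \<Longrightarrow> space (P i w) = UNIV"
  and is_model_sets: "is_model P \<Longrightarrow> A \<in> sets (P i w)"
  unfolding is_model_def by auto

lemma peval_sat: "peval (sat P V val w) \<phi> = sat P V val w \<phi>"
  by (induction "sat P V val w" \<phi> rule: peval.induct) auto

lemma sat_tautology: "tautology \<phi> \<Longrightarrow> sat P V val w \<phi>"
  unfolding tautology_def by (metis peval_sat)

lemma sat_K_dist:
  assumes "is_model P"
  shows "sat P V val w
           (Imp (K i \<alpha> (Imp \<phi> \<psi>)) (Imp (K i \<beta> \<phi>) (K i (max 0 (\<alpha> + \<beta> - 1)) \<psi>)))"
proof (simp only: sat.simps, intro impI)
  interpret prob_space "P i w" using assms by (rule is_model_prob_space)
  let ?A = "{u. sat P V val u \<phi>}" and ?B = "{u. sat P V val u \<psi>}"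
    and ?C = "{u. sat P V val u \<phi> \<longrightarrow> sat P V val u \<psi>}"
  assume "real_of_rat \<alpha> \<le> prob ?C" "real_of_rat \<beta> \<le> prob ?A"
  moreover have "prob ?A + prob ?C - 1 \<le> prob (?A \<inter> ?C)"
    using assms by (intro prob_Int_lower_bound is_model_sets)
  moreover have "prob (?A \<inter> ?C) \<le> prob ?B"
    using assms by (intro finite_measure_mono is_model_sets) auto
  ultimately have "real_of_rat (\<alpha> + \<beta> - 1) \<le> prob ?B"
    by (simp add: of_rat_add of_rat_diff)
  then show "real_of_rat (max 0 (\<alpha> + \<beta> - 1)) \<le> prob ?B"
    by (simp add: max_def)
qed

lemma sat_K_cons:
  assumes "is_model P" "\<alpha> + \<beta> > 1"
  shows "sat P V val w (Imp (K i \<alpha> \<phi>) (Neg (K i \<beta> (Neg \<phi>))))"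
proof -
  interpret prob_space "P i w" using assms(1) by (rule is_model_prob_space)
  have "{u. \<not> sat P V val u \<phi>} = space (P i w) - {u. sat P V val u \<phi>}"
    using assms(1) by (auto simp: is_model_space)
  then have "prob {u. \<not> sat P V val u \<phi>} = 1 - prob {u. sat P V val u \<phi>}"
    using assms(1) by (simp add: prob_compl is_model_sets)
  moreover have "real_of_rat \<alpha> + real_of_rat \<beta> > 1"
    using assms(2) by (metis of_rat_add of_rat_1 of_rat_less)
  ultimately show ?thesis by auto
qed

lemma sat_K_of_valid:
  assumes "is_model P" "\<And>u. sat P V val u \<phi>" "\<theta> \<in> ThetaK"
  shows "sat P V val w (K i \<theta> \<phi>)"
proof -
  interpret prob_space "P i w" using assms(1) by (rule is_model_prob_space)
  have "{u. sat P V val u \<phi>} = space (P i w)"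
    using assms(1,2) by (auto simp: is_model_space)
  moreover have "real_of_rat \<theta> \<le> 1"
    using assms(3) unfolding ThetaK_def by (metis mem_Collect_eq of_rat_1 of_rat_less_eq)
  ultimately show ?thesis by (simp add: prob_space)
qed

lemma measure_eq_if_sat_K1_Eq:
  assumes "is_model P" "sat P V val w (K i 1 (Eq t s))"
    and "\<And>u. val u t = val u s \<Longrightarrow> u \<in> A \<longleftrightarrow> u \<in> B"
  shows "measure (P i w) A = measure (P i w) B"
proof -
  interpret prob_space "P i w" using assms(1) by (rule is_model_prob_space)
  have "prob {u. val u t = val u s} = 1"
    using assms(2) by (intro antisym prob_le_1) simp
  then show ?thesis
    using assms(1,3) by (intro prob_eq_if_agree_almost_surely is_model_sets) auto
qed

lemma sat_K_subst:
  assumes "is_model P"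
  shows "sat P V val w (Imp (K i 1 (Eq t s)) (Iff (K i \<theta> (Eq t u)) (K i \<theta> (Eq s u))))"
  using measure_eq_if_sat_K1_Eq[OF assms, of V val w i t s
      "{x. val x t = val x u}" "{x. val x s = val x u}"]
  by (auto simp: Iff_def Conj_def)

lemma sat_Kv_subst:
  assumes "is_model P"
  shows "sat P V val w (Imp (K i 1 (Eq t s)) (Iff (Kv i \<eta> t) (Kv i \<eta> s)))"
  using measure_eq_if_sat_K1_Eq[OF assms, of V val w i t s "{x. val x t = d}" "{x. val x s = d}"
      for d]
  by (auto simp: Iff_def Conj_def)

lemma derivable_sound:
  assumes "derivable \<phi>" "is_model P"
  shows "sat P V val w \<phi>"
  using assms(1) proof (induction \<phi> arbitrary: w rule: derivable.induct)
  case (Taut \<phi>)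
  show ?case using Taut(2) by (rule sat_tautology)
next
  case (EqTrans t s u)
  then show ?case by (auto simp: Conj_def)
next
  case (EqSubst t s u)
  then show ?case by (auto simp: Conj_def Iff_def)
next
  case (Mono \<phi> \<theta> \<theta>' i)
  then show ?case by (auto simp: of_rat_less_eq intro: order_trans[rotated])
next
  case (KDist \<phi> \<psi> \<alpha> \<beta> i)
  show ?case using assms(2) by (rule sat_K_dist)
next
  case (KCons \<phi> \<alpha> \<beta> i)
  show ?case using assms(2) KCons(4) by (rule sat_K_cons)
next
  case (KSubst \<theta> i t s u)
  show ?case using assms(2) by (rule sat_K_subst)
next
  case (KvSubst \<eta> i t s)
  show ?case using assms(2) by (rule sat_Kv_subst)
next
  case (Nec \<phi> \<theta> i)
  show ?case using assms(2) Nec.IH Nec.hyps(2) by (rule sat_K_of_valid)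
qed simp_all

theorem theorem1:
  fixes \<phi> :: "('p::countable, 't::countable, 'i::finite) fm"
    and P :: "'i \<Rightarrow> 'w \<Rightarrow> 'w measure"
    and V :: "'w \<Rightarrow> 'p \<Rightarrow> bool"
    and val :: "'w \<Rightarrow> 't \<Rightarrow> 'd"
    and w :: 'w
  assumes "wf_fm \<phi>"
    and "derivable \<phi>"
    and "is_model P"
  shows "sat P V val w \<phi>"
  using assms(2,3) by (rule derivable_sound)

end
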